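(* Let $3\le n\le k$ be integers. For $j=1,\dots,n-2$ define $$\Gamma_j=\sum_{\mathbf{r}\in E_j}\sum_{l=1}^{j}\mathds{1}_{\{r_l=1\}}\frac{(|\mathbf{r}|-1)!}{r_1!\cdots r_{n-1}!}\Big(\frac1k\Big)^{|\mathbf{r}|}(r_{n-1}-1)$$ and $T_j=(j+1)\binom{k-n+j+1}{k-n}\Gamma_j+1$. Then for $j=1,\dots,n-2$, $$T_j=-(k-n)+(k-n+1)\sum_{i=2}^{j+1}\frac{1}{k-n+i}.$$
   Context: $\mathbb{N}=\{0,1,2,\dots\}$, $|\mathbf{r}|=r_1+\dots+r_{n-1}$. For $j=1,\dots,n-1$, $E_j$ is the set of $\mathbf{r}\in\mathbb{N}^{n-1}$ with $r_i\ge1$ for $1\le i\le j$, $r_l\ge0$ for $j<l\le n-1$, and at least one of $r_1,\dots,r_j$ equal to $1$. *)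

theory Defs
  imports "HOL-Analysis.Analysis"
begin

text \<open>Vectors r in N^(n-1) are represented as functions nat => nat with r i = 0 outside {1..n-1}.\<close>

definition E_set :: "nat \<Rightarrow> nat \<Rightarrow> (nat \<Rightarrow> nat) set" where
  "E_set n j = {r. (\<forall>i. i \<notin> {1..n-1} \<longrightarrow> r i = 0)
                  \<and> (\<forall>i\<in>{1..j}. 1 \<le> r i)
                  \<and> (\<exists>i\<in>{1..j}. r i = 1)}"

definition absr :: "nat \<Rightarrow> (nat \<Rightarrow> nat) \<Rightarrow> nat" where
  "absr n r = (\<Sum>i=1..n-1. r i)"

definition Gamma_term :: "nat \<Rightarrow> nat \<Rightarrow> nat \<Rightarrow> (nat \<Rightarrow> nat) \<Rightarrow> real" where
  "Gamma_term n k j r =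
     (\<Sum>l=1..j. if r l = 1 then 1 else 0)
     * (fact (absr n r - 1) / (\<Prod>i=1..n-1. fact (r i)))
     * (1 / real k) ^ (absr n r)
     * (real (r (n-1)) - 1)"

definition Gamma :: "nat \<Rightarrow> nat \<Rightarrow> nat \<Rightarrow> real" where
  "Gamma n k j = infsum (Gamma_term n k j) (E_set n j)"

definition T_val :: "nat \<Rightarrow> nat \<Rightarrow> nat \<Rightarrow> real" where
  "T_val n k j = real (j+1) * real ((k-n+j+1) choose (k-n)) * Gamma n k j + 1"

end

theory Submission
  imports Defs "HOL-Computational_Algebra.Formal_Power_Series"
begin

(* Fix l <= j and sum the terms of Gamma_j with r_l = 1 by levels |r| = m. Each level is a
   coefficient of exponential generating functions,
     (m-1)! k^-m [t^m] t (e^t - 1)^(j-1) e^((n-2-j)t) (t e^t - e^t),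
   the last factor having coefficients (r - 1)/r!. Expanding (e^t - 1)^(j-1) binomially reduces
   the sum over m to the series sum_m (m-1)! k^-m [t^m] t^p e^(ct) = (k - c)^-p for p = 1, 2, so
     Gamma_j = j sum_s binom(j-1, s) (-1)^s ((a+s)^-2 - (a+s)^-1),   a = k - n + 2.
   These alternating sums equal (j-1)!/(a)_j sum_(i<j) 1/(a+i) and (j-1)!/(a)_j, and
   (j+1) binom(k-n+j+1, k-n) j (j-1)!/(a)_j = k - n + 1. Since the terms of Gamma_j change sign,
   the parts coming from t e^t and from e^t are summed separately as nonnegative families. *)

no_notation vec_nth (infixl "$" 90)
notation fps_nth (infixl "$" 75)

section \<open>Alternating binomial sums\<close>

definition alt_binomial_sum :: "nat \<Rightarrow> (nat \<Rightarrow> real) \<Rightarrow> real" where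
  "alt_binomial_sum j g = (\<Sum>s\<le>j. real (j choose s) * (-1)^s * g s)"

lemma alt_binomial_sum_Suc:
  "alt_binomial_sum (Suc j) g = alt_binomial_sum j g - alt_binomial_sum j (\<lambda>s. g (Suc s))"
proof -
  have "alt_binomial_sum (Suc j) g
      = g 0 + (\<Sum>s\<le>j. real (j choose Suc s) * (-1)^Suc s * g (Suc s))
        - alt_binomial_sum j (\<lambda>s. g (Suc s))"
    unfolding alt_binomial_sum_def
    by (subst sum.atMost_Suc_shift)
       (simp add: sum_subtractf[symmetric] algebra_simps sum.distrib[symmetric])
  also have "g 0 + (\<Sum>s\<le>j. real (j choose Suc s) * (-1)^Suc s * g (Suc s))
      = (\<Sum>s\<le>Suc j. real (j choose s) * (-1)^s * g s)"
    by (subst sum.atMost_Suc_shift) simp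
  also have "\<dots> = alt_binomial_sum j g"
    unfolding alt_binomial_sum_def by simp
  finally show ?thesis .
qed

lemma fact_div_pochhammer_Suc:
  fixes a :: real
  assumes "a > 0"
  shows "fact j / pochhammer a (Suc j) = fact j / pochhammer a (Suc (Suc j)) * (a + Suc j)"
    and "fact j / pochhammer (a + 1) (Suc j) = fact j / pochhammer a (Suc (Suc j)) * a"
proof -
  have "a + Suc j > 0" using assms by simp
  then show "fact j / pochhammer a (Suc j) = fact j / pochhammer a (Suc (Suc j)) * (a + Suc j)"
    by (subst pochhammer_rec') simp
  show "fact j / pochhammer (a + 1) (Suc j) = fact j / pochhammer a (Suc (Suc j)) * a"
    using assms by (subst pochhammer_rec) simp
qed

lemma alt_binomial_sum_reciprocal:
  fixes a :: real
  assumes "a > 0"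
  shows "alt_binomial_sum j (\<lambda>s. 1 / (a + s)) = fact j / pochhammer a (Suc j)"
  using assms
proof (induction j arbitrary: a)
  case 0
  then show ?case by (simp add: alt_binomial_sum_def)
next
  case (Suc j)
  have shift: "(\<lambda>s. 1 / (a + real (Suc s))) = (\<lambda>s. 1 / ((a + 1) + s))"
    by (simp add: algebra_simps)
  have IH: "alt_binomial_sum j (\<lambda>s. 1 / ((a + 1) + s)) = fact j / pochhammer (a + 1) (Suc j)"
    using Suc.prems by (intro Suc.IH) simp
  define c where "c = fact j / pochhammer a (Suc (Suc j))"
  have "alt_binomial_sum (Suc j) (\<lambda>s. 1 / (a + s)) = c * (a + Suc j) - c * a"
    unfolding alt_binomial_sum_Suc shift Suc.IH[OF Suc.prems] IH
      fact_div_pochhammer_Suc[OF Suc.prems] c_def ..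
  also have "\<dots> = c * Suc j"
    by (simp add: algebra_simps)
  finally show ?case
    unfolding c_def by simp
qed

lemma alt_binomial_sum_reciprocal_sq:
  fixes a :: real
  assumes "a > 0"
  shows "alt_binomial_sum j (\<lambda>s. 1 / (a + s)^2)
       = fact j / pochhammer a (Suc j) * (\<Sum>i\<le>j. 1 / (a + real i))"
  using assms
proof (induction j arbitrary: a)
  case 0
  then show ?case by (simp add: alt_binomial_sum_def power2_eq_square)
next
  case (Suc j)
  define b c S where "b = a + Suc j" and "c = fact j / pochhammer a (Suc (Suc j))"
    and "S = (\<Sum>i\<le>j. 1 / (a + real i))"
  have "b > 0" using Suc.prems unfolding b_def by simp
  have shift: "(\<lambda>s. 1 / (a + real (Suc s))^2) = (\<lambda>s. 1 / ((a + 1) + s)^2)"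
    by (simp add: algebra_simps)
  have IH: "alt_binomial_sum j (\<lambda>s. 1 / ((a + 1) + s)^2)
      = fact j / pochhammer (a + 1) (Suc j) * (\<Sum>i\<le>j. 1 / (a + 1 + real i))"
    using Suc.prems by (intro Suc.IH) simp
  have "(\<Sum>i\<le>j. 1 / (a + 1 + real i)) = S - 1 / a + 1 / b"
    unfolding S_def b_def by (induction j) (simp_all add: algebra_simps)
  then have "alt_binomial_sum (Suc j) (\<lambda>s. 1 / (a + s)^2) = c * b * S - c * a * (S - 1 / a + 1 / b)"
    unfolding alt_binomial_sum_Suc shift Suc.IH[OF Suc.prems] IH
      fact_div_pochhammer_Suc[OF Suc.prems] b_def c_def S_def
    by simp
  also have "\<dots> = (b - a) * c * (S + 1 / b)"
    using Suc.prems \<open>b > 0\<close> by (simp add: field_simps)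
  finally show ?case
    unfolding b_def c_def S_def by (simp add: mult_ac)
qed

lemma fact_mult_binomial_eq_pochhammer:
  "fact (Suc j) * real ((e + Suc j) choose e) = pochhammer (real e + 1) (Suc j)"
proof -
  have "(e + Suc j) choose e = (e + Suc j) choose Suc j"
    using binomial_symmetric[of e "e + Suc j"] by simp
  then have "real ((e + Suc j) choose e) = of_nat (e + Suc j) gchoose Suc j"
    by (simp only: binomial_gbinomial)
  also have "\<dots> = pochhammer (of_nat (e + Suc j) - of_nat (Suc j) + 1) (Suc j) / fact (Suc j)"
    by (rule gbinomial_pochhammer')
  also have "of_nat (e + Suc j) - of_nat (Suc j) + 1 = real e + 1"
    by simp
  finally show ?thesis by simp
qed

lemma binomial_mult_fact_div_pochhammer:
  assumes "j \<ge> 1"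
  shows "real (j + 1) * real ((e + j + 1) choose e) * (real j * fact (j - 1) / pochhammer (real e + 2) j)
       = real e + 1"
proof -
  have "real (j + 1) * real ((e + j + 1) choose e) * (real j * fact (j - 1))
      = fact (Suc j) * real ((e + Suc j) choose e)"
    using assms by (cases j) (simp_all add: algebra_simps)
  also have "\<dots> = (real e + 1) * pochhammer (real e + 2) j"
    unfolding fact_mult_binomial_eq_pochhammer pochhammer_rec by (simp add: add_ac)
  finally show ?thesis
    using pochhammer_pos[of "real e + 2" j] by (simp add: field_simps)
qed

section \<open>Summation over weak compositions\<close>

definition weak_compositions :: "'a set \<Rightarrow> nat \<Rightarrow> ('a \<Rightarrow> nat) set" where
  "weak_compositions I m = {r. (\<forall>i. i \<notin> I \<longrightarrow> r i = 0) \<and> sum r I = m}"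

lemma weak_compositions_eq_count_image:
  assumes "finite I"
  shows "weak_compositions I m = count ` multisets_of_size I m"
proof
  show "weak_compositions I m \<subseteq> count ` multisets_of_size I m"
  proof
    fix r assume r: "r \<in> weak_compositions I m"
    then have "{i. r i > 0} \<subseteq> I" by (auto simp: weak_compositions_def)
    then have "finite {i. r i > 0}" using assms by (rule finite_subset)
    then have count: "count (Abs_multiset r) = r" by (rule count_Abs_multiset)
    have "set_mset (Abs_multiset r) \<subseteq> I" "size (Abs_multiset r) = m"
      using r assms unfolding set_mset_def size_multiset_overloaded_eq count weak_compositions_def
      by (auto intro!: sum.mono_neutral_left)
    then show "r \<in> count ` multisets_of_size I m"
      unfolding multisets_of_size_def by (metis (mono_tags, lifting) count image_eqI mem_Collect_eq)
  qed
  show "count ` multisets_of_size I m \<subseteq> weak_compositions I m"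
  proof
    fix r assume "r \<in> count ` multisets_of_size I m"
    then obtain X where X: "set_mset X \<subseteq> I" "size X = m" "r = count X"
      by (auto simp: multisets_of_size_def)
    have "sum (count X) I = size X"
      unfolding size_multiset_overloaded_eq using X(1) assms
      by (intro sum.mono_neutral_right) (auto simp: not_in_iff)
    then show "r \<in> weak_compositions I m"
      using X by (auto simp: weak_compositions_def simp flip: not_in_iff)
  qed
qed

lemma finite_weak_compositions: "finite I \<Longrightarrow> finite (weak_compositions I m)"
  by (simp add: weak_compositions_eq_count_image finite_multisets_of_size)

lemma fps_prod_nth_weak_compositions:
  assumes "finite I"
  shows "(\<Prod>i\<in>I. f i) $ m = (\<Sum>r\<in>weak_compositions I m. \<Prod>i\<in>I. f i $ r i)"
  unfolding fps_prod_nth'[OF assms] weak_compositions_eq_count_image[OF assms]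
  by (simp add: sum.reindex inj_on_def multiset_eq_iff)

lemma has_sum_sum:
  fixes f :: "'b \<Rightarrow> 'a \<Rightarrow> real"
  assumes "finite L" "\<And>l. l \<in> L \<Longrightarrow> (f l has_sum c l) A"
  shows "((\<lambda>x. \<Sum>l\<in>L. f l x) has_sum (\<Sum>l\<in>L. c l)) A"
  using assms by (induction L rule: finite_induct) (auto intro: has_sum_add)

lemma has_sum_diff:
  fixes f g :: "'a \<Rightarrow> real"
  assumes "(f has_sum a) A" "(g has_sum b) A"
  shows "((\<lambda>x. f x - g x) has_sum (a - b)) A"
  using has_sum_add[OF assms(1) has_sum_uminusI[OF assms(2)]] by simp

lemma has_sum_Union_nonneg:
  fixes f :: "'a \<Rightarrow> real" and B :: "nat \<Rightarrow> 'a set"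
  assumes levels: "\<And>m. (f has_sum g m) (B m)" and g: "(g has_sum S) UNIV"
    and nonneg: "\<And>x. x \<in> (\<Union>m. B m) \<Longrightarrow> f x \<ge> 0" and disj: "disjoint_family B"
  shows "(f has_sum S) (\<Union>m. B m)"
proof -
  have "f summable_on (\<Union>m. B m)"
    using levels has_sum_imp_summable[OF g] nonneg disj
    by (intro summable_on_UnionI[where g = g]) auto
  then have sum_Union: "(f has_sum infsum f (\<Union>m. B m)) (\<Union>m. B m)"
    by (rule has_sum_infsum)
  have "inj_on snd (Sigma UNIV B)"
    using disj by (auto simp: inj_on_def disjoint_family_on_def)
  moreover have "snd ` Sigma UNIV B = (\<Union>m. B m)"
    by force
  ultimately have "((f \<circ> snd) has_sum infsum f (\<Union>m. B m)) (Sigma UNIV B)"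
    using sum_Union has_sum_reindex by metis
  then have "(g has_sum infsum f (\<Union>m. B m)) UNIV"
    by (rule has_sum_SigmaD) (simp add: levels)
  then show ?thesis
    using sum_Union g has_sum_unique by metis
qed

lemma has_sum_weighted_compositions:
  fixes f :: "'a \<Rightarrow> real fps" and w :: "nat \<Rightarrow> real"
  assumes "finite I" and f_nonneg: "\<And>i t. i \<in> I \<Longrightarrow> f i $ t \<ge> 0" and w_nonneg: "\<And>m. w m \<ge> 0"
    and sums: "(\<lambda>m. w m * (\<Prod>i\<in>I. f i) $ m) sums S"
  shows "((\<lambda>r. w (sum r I) * (\<Prod>i\<in>I. f i $ r i)) has_sum S) {r. \<forall>i. i \<notin> I \<longrightarrow> r i = 0}"
proof -
  have levels: "{r. \<forall>i. i \<notin> I \<longrightarrow> r i = 0} = (\<Union>m. weak_compositions I m)"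
    by (auto simp: weak_compositions_def)
  have "((\<lambda>r. w (sum r I) * (\<Prod>i\<in>I. f i $ r i)) has_sum w m * (\<Prod>i\<in>I. f i) $ m)
          (weak_compositions I m)" for m
  proof -
    have "(\<Sum>r\<in>weak_compositions I m. w (sum r I) * (\<Prod>i\<in>I. f i $ r i))
        = (\<Sum>r\<in>weak_compositions I m. w m * (\<Prod>i\<in>I. f i $ r i))"
      by (rule sum.cong[OF refl]) (simp add: weak_compositions_def)
    also have "\<dots> = w m * (\<Prod>i\<in>I. f i) $ m"
      by (simp add: fps_prod_nth_weak_compositions[OF \<open>finite I\<close>] sum_distrib_left)
    finally show ?thesis
      using has_sum_finite[OF finite_weak_compositions[OF \<open>finite I\<close>],
          of "\<lambda>r. w (sum r I) * (\<Prod>i\<in>I. f i $ r i)" m]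
      by simp
  qed
  moreover have "((\<lambda>m. w m * (\<Prod>i\<in>I. f i) $ m) has_sum S) UNIV"
    using sums
  proof (rule sums_nonneg_imp_has_sum)
    show "w m * (\<Prod>i\<in>I. f i) $ m \<ge> 0" for m
      unfolding fps_prod_nth_weak_compositions[OF \<open>finite I\<close>]
      using f_nonneg w_nonneg by (intro mult_nonneg_nonneg sum_nonneg prod_nonneg) auto
  qed
  moreover have "disjoint_family (weak_compositions I)"
    by (auto simp: disjoint_family_on_def weak_compositions_def)
  moreover have "w (sum r I) * (\<Prod>i\<in>I. f i $ r i) \<ge> 0" for r
    using f_nonneg w_nonneg by (intro mult_nonneg_nonneg prod_nonneg) auto
  ultimately show ?thesis
    unfolding levels by (intro has_sum_Union_nonneg)
qed

section \<open>Exponential level series\<close>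

lemma sums_fact_X_exp:
  fixes c k :: real
  assumes "0 \<le> c" "c < k"
  shows "(\<lambda>m. fact (m - 1) * (1 / k)^m * (fps_X * fps_exp c) $ m) sums (1 / (k - c))"
    (is "?f sums _")
proof -
  have "norm (c / k) < 1" using assms by simp
  then have "(\<lambda>t. 1 / k * (c / k)^t) sums (1 / k * (1 / (1 - c / k)))"
    by (intro sums_mult geometric_sums)
  moreover have "1 / k * (1 / (1 - c / k)) = 1 / (k - c)"
    using assms by (simp add: field_simps)
  moreover have "(\<lambda>t. ?f (Suc t)) = (\<lambda>t. 1 / k * (c / k)^t)"
    by (simp add: power_divide)
  ultimately have "(\<lambda>t. ?f (Suc t)) sums (1 / (k - c))"
    by simp
  then have "?f sums (1 / (k - c) + ?f 0)"
    by (rule sums_Suc_iff[THEN iffD1])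
  then show ?thesis
    by simp
qed

lemma sums_fact_X2_exp:
  fixes c k :: real
  assumes "0 \<le> c" "c < k"
  shows "(\<lambda>m. fact (m - 1) * (1 / k)^m * (fps_X^2 * fps_exp c) $ m) sums (1 / (k - c)^2)"
    (is "?f sums _")
proof -
  have "norm (c / k) < 1" using assms by simp
  then have "(\<lambda>t. (1 / k)^2 * (of_nat (Suc t) * (c / k)^t)) sums ((1 / k)^2 * (1 / (1 - c / k)^2))"
    by (intro sums_mult geometric_deriv_sums)
  moreover have "(1 / k)^2 * (1 / (1 - c / k)^2) = 1 / (k - c)^2"
    using assms by (simp add: field_simps)
  moreover have "(\<lambda>t. ?f (Suc (Suc t))) = (\<lambda>t. (1 / k)^2 * (of_nat (Suc t) * (c / k)^t))"
    by (simp add: fps_X_power_mult_nth power_divide del: of_nat_Suc) (simp add: power2_eq_square mult.assoc)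
  ultimately have "(\<lambda>t. ?f (Suc (Suc t))) sums (1 / (k - c)^2)"
    by simp
  then have "?f sums (1 / (k - c)^2 + ?f (Suc 0) + ?f 0)"
    by (intro sums_Suc_iff[THEN iffD1])
  then show ?thesis
    by (simp add: fps_X_power_mult_nth)
qed

lemma sums_fps_nth_lincomb:
  fixes w :: "nat \<Rightarrow> real" and G :: "'a \<Rightarrow> real fps"
  assumes "finite S" "\<And>s. s \<in> S \<Longrightarrow> (\<lambda>m. w m * G s $ m) sums v s"
  shows "(\<lambda>m. w m * (\<Sum>s\<in>S. fps_const (a s) * G s) $ m) sums (\<Sum>s\<in>S. a s * v s)"
proof -
  have "(\<lambda>m. \<Sum>s\<in>S. a s * (w m * G s $ m)) sums (\<Sum>s\<in>S. a s * v s)"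
    using assms by (intro sums_sum sums_mult) auto
  then show ?thesis
    by (simp add: fps_sum_nth sum_distrib_left mult_ac)
qed

lemma fps_exp_minus_one_power_mult:
  "(fps_exp (1::real) - 1)^q * fps_exp 1 ^ p
     = (\<Sum>s\<le>q. fps_const (real (q choose s) * (-1)^s) * fps_exp (real (p + q - s)))"
proof -
  have "(-1 :: real fps)^s = fps_const ((-1)^s)" for s
    by (metis fps_const_1_eq_1 fps_const_neg fps_const_power)
  then have coeff: "(of_nat (q choose s) * (-1)^s :: real fps) = fps_const (real (q choose s) * (-1)^s)"
    for s by (simp add: fps_of_nat fps_const_mult[symmetric])
  have "(fps_exp (1::real) - 1)^q = (\<Sum>s\<le>q. of_nat (q choose s) * (-1)^s * fps_exp 1 ^ (q - s))"
    using binomial_ring[of "-1" "fps_exp (1::real)" q] by simp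
  moreover have "fps_exp (1::real) ^ (q - s) * fps_exp 1 ^ p = fps_exp (real (p + q - s))"
    if "s \<le> q" for s
    using that by (simp add: fps_exp_power_mult fps_exp_add_mult[symmetric] power_add[symmetric])
  ultimately show ?thesis
    using coeff by (simp add: sum_distrib_right mult.assoc)
qed

lemma fps_X_exp_minus_exp_nth: "(fps_X * fps_exp (1::real) - fps_exp 1) $ t = (real t - 1) / fact t"
proof (cases t)
  case (Suc u)
  then show ?thesis by (simp add: field_simps del: fact_Suc) (simp add: algebra_simps)
qed simp

section \<open>The sum \<open>\<Gamma>\<^sub>j\<close>\<close>

context
  fixes n k j :: nat
  assumes n3: "3 \<le> n" and nk: "n \<le> k" and j1: "1 \<le> j" and jn: "j \<le> n - 2"
begin

definition coord_egf :: "nat \<Rightarrow> real fps \<Rightarrow> nat \<Rightarrow> real fps" where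
  "coord_egf l z i =
     (if i = l then fps_X else if i \<le> j then fps_exp 1 - 1 else if i < n - 1 then fps_exp 1 else z)"

definition weight :: "nat \<Rightarrow> real fps \<Rightarrow> (nat \<Rightarrow> nat) \<Rightarrow> real" where
  "weight l z r = fact (absr n r - 1) * (1 / real k)^(absr n r) * (\<Prod>i=1..n-1. coord_egf l z i $ r i)"

lemma prod_coord_egf:
  assumes "l \<in> {1..j}"
  shows "(\<Prod>i=1..n-1. coord_egf l z i)
       = fps_X * z * ((fps_exp 1 - 1)^(j - 1) * fps_exp 1 ^ (n - 2 - j))"
proof -
  let ?F = "coord_egf l z"
  define A where "A = ({1..j} - {l}) \<union> {Suc j..n-2}"
  have "{1..n-1} = insert (n - 1) (insert l A)" "n - 1 \<notin> insert l A" "l \<notin> A" "finite A"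
    using assms jn n3 unfolding A_def by auto
  then have "(\<Prod>i=1..n-1. ?F i) = ?F (n - 1) * (?F l * (\<Prod>i\<in>A. ?F i))"
    by simp
  also have "(\<Prod>i\<in>A. ?F i) = (\<Prod>i\<in>{1..j} - {l}. ?F i) * (\<Prod>i\<in>{Suc j..n-2}. ?F i)"
    unfolding A_def by (rule prod.union_disjoint) auto
  finally have "(\<Prod>i=1..n-1. ?F i)
      = ?F (n - 1) * (?F l * ((\<Prod>i\<in>{1..j} - {l}. ?F i) * (\<Prod>i\<in>{Suc j..n-2}. ?F i)))" .
  moreover have "(\<Prod>i\<in>{1..j} - {l}. ?F i) = (fps_exp 1 - 1)^(j - 1)"
    using assms by (simp add: coord_egf_def)
  moreover have "(\<Prod>i\<in>{Suc j..n-2}. ?F i) = (\<Prod>i\<in>{Suc j..n-2}. fps_exp 1)"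
    using assms n3 by (intro prod.cong) (auto simp: coord_egf_def)
  moreover have "?F l = fps_X" "?F (n - 1) = z"
    using assms jn n3 by (auto simp: coord_egf_def)
  ultimately show ?thesis
    by (simp add: mult_ac)
qed

lemma coord_egf_nth_nonneg: "(\<And>t. z $ t \<ge> 0) \<Longrightarrow> coord_egf l z i $ t \<ge> 0"
  by (simp add: coord_egf_def)

lemma has_sum_weight:
  assumes l: "l \<in> {1..j}" and z_nonneg: "\<And>t. z $ t \<ge> 0"
    and levels: "\<And>s. s \<le> j - 1 \<Longrightarrow>
      (\<lambda>m. fact (m - 1) * (1 / real k)^m * (fps_X * z * fps_exp (real (n - 3 - s))) $ m) sums v s"
  shows "(weight l z has_sum alt_binomial_sum (j - 1) v) {r. \<forall>i. i \<notin> {1..n-1} \<longrightarrow> r i = 0}"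
proof -
  have "n - 2 - j + (j - 1) - s = n - 3 - s" for s
    using j1 jn by simp
  then have "(\<Prod>i=1..n-1. coord_egf l z i)
      = (\<Sum>s\<le>j-1. fps_const (real (j - 1 choose s) * (-1)^s) * (fps_X * z * fps_exp (real (n - 3 - s))))"
    unfolding prod_coord_egf[OF l] fps_exp_minus_one_power_mult sum_distrib_left
    by (simp add: mult_ac)
  then have "(\<lambda>m. fact (m - 1) * (1 / real k)^m * (\<Prod>i=1..n-1. coord_egf l z i) $ m)
      sums alt_binomial_sum (j - 1) v"
    unfolding alt_binomial_sum_def using levels
    by (simp only:) (rule sums_fps_nth_lincomb[where w = "\<lambda>m. fact (m - 1) * (1 / real k)^m"], auto)
  then have "((\<lambda>r. fact (sum r {1..n-1} - 1) * (1 / real k)^(sum r {1..n-1})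
        * (\<Prod>i=1..n-1. coord_egf l z i $ r i)) has_sum alt_binomial_sum (j - 1) v)
      {r. \<forall>i. i \<notin> {1..n-1} \<longrightarrow> r i = 0}"
    using z_nonneg by (intro has_sum_weighted_compositions coord_egf_nth_nonneg) auto
  then show ?thesis
    unfolding weight_def absr_def .
qed

lemma exp_rate_less:
  assumes "s \<le> j - 1"
  shows "real (n - 3 - s) + 1 < real k"
  using assms j1 jn n3 nk by (simp add: of_nat_diff)

lemma k_minus_exp_rate:
  assumes "s \<le> j - 1"
  shows "real k - (real (n - 3 - s) + 1) = real (k - n + 2) + real s"
  using assms j1 jn n3 nk by (simp add: of_nat_diff)

lemma has_sum_weight_exp:
  assumes "l \<in> {1..j}"
  shows "(weight l (fps_exp 1) has_sum alt_binomial_sum (j - 1) (\<lambda>s. 1 / (real (k - n + 2) + s)))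
           {r. \<forall>i. i \<notin> {1..n-1} \<longrightarrow> r i = 0}"
proof (rule has_sum_weight[OF assms])
  fix s assume s: "s \<le> j - 1"
  define c where "c = real (n - 3 - s)"
  have shift: "fps_X * fps_exp 1 * fps_exp c = fps_X * fps_exp (c + 1)"
    by (simp add: fps_exp_add_mult mult_ac)
  have "(\<lambda>m. fact (m - 1) * (1 / real k)^m * (fps_X * fps_exp (c + 1)) $ m)
      sums (1 / (real k - (c + 1)))"
    using exp_rate_less[OF s] unfolding c_def by (intro sums_fact_X_exp) auto
  then show "(\<lambda>m. fact (m - 1) * (1 / real k)^m * (fps_X * fps_exp 1 * fps_exp c) $ m)
      sums (1 / (real (k - n + 2) + s))"
    unfolding shift using k_minus_exp_rate[OF s, folded c_def] by simp
qed simp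

lemma has_sum_weight_X_exp:
  assumes "l \<in> {1..j}"
  shows "(weight l (fps_X * fps_exp 1) has_sum alt_binomial_sum (j - 1) (\<lambda>s. 1 / (real (k - n + 2) + s)^2))
           {r. \<forall>i. i \<notin> {1..n-1} \<longrightarrow> r i = 0}"
proof (rule has_sum_weight[OF assms])
  fix s assume s: "s \<le> j - 1"
  define c where "c = real (n - 3 - s)"
  have shift: "fps_X * (fps_X * fps_exp 1) * fps_exp c = fps_X^2 * fps_exp (c + 1)"
    by (simp add: fps_exp_add_mult power2_eq_square mult_ac)
  have "(\<lambda>m. fact (m - 1) * (1 / real k)^m * (fps_X^2 * fps_exp (c + 1)) $ m)
      sums (1 / (real k - (c + 1))^2)"
    using exp_rate_less[OF s] unfolding c_def by (intro sums_fact_X2_exp) auto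
  then show "(\<lambda>m. fact (m - 1) * (1 / real k)^m * (fps_X * (fps_X * fps_exp 1) * fps_exp c) $ m)
      sums (1 / (real (k - n + 2) + s)^2)"
    unfolding shift using k_minus_exp_rate[OF s, folded c_def] by simp
qed simp

lemma prod_coord_egf_nth:
  assumes "l \<in> {1..j}"
  shows "(\<Prod>i=1..n-2. coord_egf l z i $ r i)
       = (if r l = 1 \<and> (\<forall>i\<in>{1..j}. 1 \<le> r i) then 1 / (\<Prod>i=1..n-2. fact (r i)) else 0)"
proof (cases "r l = 1 \<and> (\<forall>i\<in>{1..j}. 1 \<le> r i)")
  case True
  have "coord_egf l z i $ r i = 1 / fact (r i)" if "i \<in> {1..n-2}" for i
    using True that by (force simp: coord_egf_def)
  then show ?thesis
    using True by (simp add: prod_dividef)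
next
  case False
  then have "\<exists>i\<in>{1..n-2}. coord_egf l z i $ r i = 0"
  proof (cases "r l = 1")
    case True
    with False obtain i where "i \<in> {1..j}" "r i < 1"
      by (auto simp: not_le)
    with True have "i \<in> {1..j}" "r i = 0" "i \<noteq> l"
      by auto
    then show ?thesis
      using jn by (intro bexI[of _ i]) (auto simp: coord_egf_def)
  qed (use assms jn in \<open>auto simp: coord_egf_def intro!: bexI[of _ l]\<close>)
  then show ?thesis
    using False by (simp add: prod_zero)
qed

lemma weight_diff:
  assumes "l \<in> {1..j}"
  shows "weight l (fps_X * fps_exp 1) r - weight l (fps_exp 1) r
       = (if r l = 1 \<and> (\<forall>i\<in>{1..j}. 1 \<le> r i)
          then fact (absr n r - 1) / (\<Prod>i=1..n-1. fact (r i)) * (1 / real k)^(absr n r)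
               * (real (r (n - 1)) - 1)
          else 0)"
proof -
  define P :: real
    where "P = (if r l = 1 \<and> (\<forall>i\<in>{1..j}. 1 \<le> r i) then 1 / (\<Prod>i=1..n-2. fact (r i)) else 0)"
  have last: "(\<Prod>i=1..n-1. F i) = (\<Prod>i=1..n-2. F i) * F (n - 1)" for F :: "nat \<Rightarrow> real"
  proof -
    have "{1..n-1} = insert (n - 1) {1..n-2}" "n - 1 \<notin> {1..n-2}"
      using n3 by auto
    then show ?thesis by (simp add: mult.commute)
  qed
  have "weight l z r = fact (absr n r - 1) * (1 / real k)^(absr n r) * P * z $ r (n - 1)" for z
  proof -
    have "coord_egf l z (n - 1) = z"
      using assms jn n3 by (auto simp: coord_egf_def)
    then show ?thesis
      unfolding weight_def last prod_coord_egf_nth[OF assms] P_def by (simp add: mult.assoc)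
  qed
  then have "weight l (fps_X * fps_exp 1) r - weight l (fps_exp 1) r
      = fact (absr n r - 1) * (1 / real k)^(absr n r) * P * (fps_X * fps_exp 1 - fps_exp 1) $ r (n - 1)"
    by (simp add: algebra_simps)
  then show ?thesis
    unfolding fps_X_exp_minus_exp_nth P_def last by simp
qed

lemma sum_weight_diff:
  assumes "\<forall>i. i \<notin> {1..n-1} \<longrightarrow> r i = 0"
  shows "(\<Sum>l=1..j. weight l (fps_X * fps_exp 1) r - weight l (fps_exp 1) r)
       = (if r \<in> E_set n j then Gamma_term n k j r else 0)"
proof (cases "\<forall>i\<in>{1..j}. 1 \<le> r i")
  case True
  define K where "K = fact (absr n r - 1) / (\<Prod>i=1..n-1. fact (r i)) * (1 / real k)^(absr n r)
    * (real (r (n - 1)) - 1)"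
  have "(\<Sum>l=1..j. weight l (fps_X * fps_exp 1) r - weight l (fps_exp 1) r)
      = (\<Sum>l=1..j. if r l = 1 then 1 else 0) * K"
    unfolding sum_distrib_right using True by (intro sum.cong) (auto simp: weight_diff K_def)
  moreover have "Gamma_term n k j r = (\<Sum>l=1..j. if r l = 1 then 1 else 0) * K"
    unfolding Gamma_term_def K_def by (simp add: mult_ac)
  moreover have "(\<Sum>l=1..j. if r l = 1 then 1 else (0::real)) = 0" if "r \<notin> E_set n j"
    using that assms True by (auto simp: E_set_def)
  ultimately show ?thesis
    by auto
next
  case False
  then have "weight l (fps_X * fps_exp 1) r - weight l (fps_exp 1) r = 0" if "l \<in> {1..j}" for l
    by (subst weight_diff[OF that]) (rule if_not_P, blast)
  moreover have "r \<notin> E_set n j"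
    using False by (auto simp: E_set_def)
  ultimately show ?thesis
    by simp
qed

lemma Gamma_eq_alt_binomial_sums:
  "Gamma n k j = real j * (alt_binomial_sum (j - 1) (\<lambda>s. 1 / (real (k - n + 2) + s)^2)
                          - alt_binomial_sum (j - 1) (\<lambda>s. 1 / (real (k - n + 2) + s)))"
proof -
  define U where "U = {r :: nat \<Rightarrow> nat. \<forall>i. i \<notin> {1..n-1} \<longrightarrow> r i = 0}"
  have "((\<lambda>r. \<Sum>l=1..j. weight l (fps_X * fps_exp 1) r - weight l (fps_exp 1) r) has_sum
      (\<Sum>l=1..j. alt_binomial_sum (j - 1) (\<lambda>s. 1 / (real (k - n + 2) + s)^2)
                - alt_binomial_sum (j - 1) (\<lambda>s. 1 / (real (k - n + 2) + s)))) U"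
    unfolding U_def by (intro has_sum_sum has_sum_diff has_sum_weight_X_exp has_sum_weight_exp) auto
  moreover have "E_set n j \<subseteq> U"
    unfolding E_set_def U_def by auto
  moreover have "(\<Sum>l=1..j. weight l (fps_X * fps_exp 1) r - weight l (fps_exp 1) r)
      = (if r \<in> E_set n j then Gamma_term n k j r else 0)" if "r \<in> U" for r
    using that unfolding U_def by (intro sum_weight_diff) simp
  ultimately have "(Gamma_term n k j has_sum
      real j * (alt_binomial_sum (j - 1) (\<lambda>s. 1 / (real (k - n + 2) + s)^2)
                - alt_binomial_sum (j - 1) (\<lambda>s. 1 / (real (k - n + 2) + s)))) (E_set n j)"
    by (subst has_sum_cong_neutral[where T = U]) auto
  then show ?thesis
    unfolding Gamma_def by (rule infsumI)
qed

lemma Gamma_closed_form: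
  "Gamma n k j = real j * fact (j - 1) / pochhammer (real (k - n) + 2) j
                 * ((\<Sum>i=2..j+1. 1 / (real k - real n + real i)) - 1)"
proof -
  define a where "a = real (k - n) + 2"
  have "a > 0" and j: "Suc (j - 1) = j" and a: "real (k - n + 2) = a"
    using j1 unfolding a_def by auto
  have "{0 + 2..j - 1 + 2} = {2..j + 1}"
    using j1 by simp
  then have "(\<Sum>i=2..j+1. 1 / (real (k - n) + real i)) = (\<Sum>i=0..j-1. 1 / (real (k - n) + real (i + 2)))"
    using sum.shift_bounds_cl_nat_ivl[of "\<lambda>i. 1 / (real (k - n) + real i)" 0 2 "j - 1"] by (simp only:)
  then have "(\<Sum>i\<le>j - 1. 1 / (a + real i)) = (\<Sum>i=2..j+1. 1 / (real k - real n + real i))"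
    unfolding a_def atLeast0AtMost using nk by (simp add: of_nat_diff add_ac)
  then show ?thesis
    unfolding Gamma_eq_alt_binomial_sums a alt_binomial_sum_reciprocal[OF \<open>a > 0\<close>]
      alt_binomial_sum_reciprocal_sq[OF \<open>a > 0\<close>] j a_def[symmetric]
    by (simp add: algebra_simps)
qed

end

theorem lemmaD1:
  fixes n k j :: nat
  assumes "3 \<le> n" "n \<le> k" "1 \<le> j" "j \<le> n - 2"
  shows "T_val n k j = - (real k - real n)
           + (real k - real n + 1) * (\<Sum>i=2..j+1. 1 / (real k - real n + real i))"
proof -
  let ?H = "\<Sum>i=2..j+1. 1 / (real k - real n + real i)"
  have "T_val n k j = real (j + 1) * real ((k - n + j + 1) choose (k - n))
      * (real j * fact (j - 1) / pochhammer (real (k - n) + 2) j) * (?H - 1) + 1"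
    unfolding T_val_def Gamma_closed_form[OF assms] by (simp only: mult.assoc)
  also have "\<dots> = (real (k - n) + 1) * (?H - 1) + 1"
    unfolding binomial_mult_fact_div_pochhammer[OF assms(3)] ..
  finally show ?thesis
    using assms(2) by (simp add: of_nat_diff algebra_simps)
qed

end
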